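(* Let $\gamma\in(0,2)$, $d\in\mathbb N_+$ and $H\in S^d_\gamma$. Then there is $C>0$ such that for all integers $n\ge1$, $$\frac{n^\gamma}{n^{2d}}\sup_{s\in[0,T]}\sum_{\hat x,\hat y\in\mathbb Z^d}\big[H_s(\tfrac{\hat y}n)-H_s(\tfrac{\hat x}n)\big]^2p_\gamma(\hat y-\hat x)\le C\frac{n+n^\gamma}{n^{d+1}}\le C\frac{n+n^\gamma}{n^2},$$ and there is $C'>0$ such that for all integers $n\ge2$, $\frac{n+n^\gamma}{n^2}\le C'\frac{r_n^\gamma}{n}$.
   Context: Fix $T>0$. $p_\gamma(\hat z)=c_\gamma|\hat z|^{-d-\gamma}\mathbb 1_{\hat z\ne0}$ with $c_\gamma>0$ such that $\sum_{\hat z}p_\gamma(\hat z)=1$. $r_n^\gamma=1$ if $\gamma\in(0,1)$, $\log n$ if $\gamma=1$, $n^{\gamma-1}$ if $\gamma\in(1,2)$. Test functions: $C^{1,2}$ = functions on $[0,T]\times\mathbb R^d$ continuously differentiable in time and twice in space; $C^{1,2}_c$ those with compact support; $S^{1,2}$ those $G\in C^{1,2}$ with $\partial_sG_s$ twice continuously differentiable in space and $\sup_s\sup_{\hat u}|\hat u|^k\sum_{K\in\{G_s,\partial_sG_s\}}(|K|+\sum_j|\partial_jK|+\sum_{i,j}|\partial_{ij}K|)<\infty$ for all $k$. $S^d_\gamma=C^{1,2}_c$ if $\gamma\in(0,1]$ or $d\ge2$; $S^{1,2}([0,T]\times\mathbb R)$ if $d=1,\gamma\in(1,2)$. *)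

theory Defs
  imports "HOL-Analysis.Analysis"
begin

text \<open>Points of R^d are vectors of type real^'n with d = CARD('n).
  The lattice Z^d is the set of integer-coordinate vectors.\<close>

definition lattice :: "(real^'n::finite) set" where
  "lattice = {x. \<forall>i. x $ i \<in> \<int>}"

definition c_gamma :: "real \<Rightarrow> 'n::finite itself \<Rightarrow> real" where
  "c_gamma \<gamma> _ = 1 / (\<Sum>\<^sub>\<infinity>z \<in> (lattice :: (real^'n) set) - {0}.
        norm z powr (- (real CARD('n) + \<gamma>)))"

definition p_gamma :: "real \<Rightarrow> real^'n::finite \<Rightarrow> real" where
  "p_gamma \<gamma> z = (if z = 0 then 0
     else c_gamma \<gamma> TYPE('n) * norm z powr (- (real CARD('n) + \<gamma>)))"

definition r_n :: "real \<Rightarrow> nat \<Rightarrow> real" where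
  "r_n \<gamma> n = (if \<gamma> < 1 then 1 else if \<gamma> = 1 then ln (real n) else real n powr (\<gamma> - 1))"

definition sderiv :: "'n::finite \<Rightarrow> (real^'n \<Rightarrow> real) \<Rightarrow> (real^'n \<Rightarrow> real) \<Rightarrow> bool" where
  "sderiv i f g \<longleftrightarrow> (\<forall>u. ((\<lambda>h. f (u + h *\<^sub>R axis i 1)) has_real_derivative g u) (at 0))"

abbreviation jcont :: "real \<Rightarrow> (real \<Rightarrow> real^'n::finite \<Rightarrow> real) \<Rightarrow> bool" where
  "jcont T F \<equiv> continuous_on ({0..T} \<times> UNIV) (\<lambda>p. F (fst p) (snd p))"

text \<open>C^{1,2} on [0,T] x R^d, with witnesses Ht (time derivative), D1 (first spatial
  partials), D2 (second spatial partials, D2 i j = d_j d_i), all jointly continuous.\<close>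

definition C12_wit :: "real \<Rightarrow> (real \<Rightarrow> real^'n::finite \<Rightarrow> real) \<Rightarrow>
    (real \<Rightarrow> real^'n \<Rightarrow> real) \<Rightarrow> ('n \<Rightarrow> real \<Rightarrow> real^'n \<Rightarrow> real) \<Rightarrow>
    ('n \<Rightarrow> 'n \<Rightarrow> real \<Rightarrow> real^'n \<Rightarrow> real) \<Rightarrow> bool" where
  "C12_wit T H Ht D1 D2 \<longleftrightarrow>
     (\<forall>s\<in>{0..T}. \<forall>u. ((\<lambda>t. H t u) has_real_derivative Ht s u) (at s within {0..T})) \<and>
     (\<forall>s\<in>{0..T}. \<forall>i. sderiv i (H s) (D1 i s)) \<and>
     (\<forall>s\<in>{0..T}. \<forall>i j. sderiv j (D1 i s) (D2 i j s)) \<and>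
     jcont T H \<and> jcont T Ht \<and> (\<forall>i. jcont T (D1 i)) \<and> (\<forall>i j. jcont T (D2 i j))"

definition C12 :: "real \<Rightarrow> (real \<Rightarrow> real^'n::finite \<Rightarrow> real) \<Rightarrow> bool" where
  "C12 T H \<longleftrightarrow> (\<exists>Ht D1 D2. C12_wit T H Ht D1 D2)"

definition C12c :: "real \<Rightarrow> (real \<Rightarrow> real^'n::finite \<Rightarrow> real) \<Rightarrow> bool" where
  "C12c T H \<longleftrightarrow> C12 T H \<and> (\<exists>K. compact K \<and> (\<forall>s\<in>{0..T}. \<forall>u. u \<notin> K \<longrightarrow> H s u = 0))"

definition S12 :: "real \<Rightarrow> (real \<Rightarrow> real^'n::finite \<Rightarrow> real) \<Rightarrow> bool" where
  "S12 T G \<longleftrightarrow> (\<exists>Gt D1 D2 E1 E2. C12_wit T G Gt D1 D2 \<and>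
     (\<forall>s\<in>{0..T}. \<forall>i. sderiv i (Gt s) (E1 i s) \<and> continuous_on UNIV (E1 i s)) \<and>
     (\<forall>s\<in>{0..T}. \<forall>i j. sderiv j (E1 i s) (E2 i j s) \<and> continuous_on UNIV (E2 i j s)) \<and>
     (\<forall>k::nat. \<exists>B. \<forall>s\<in>{0..T}. \<forall>u.
        norm u ^ k * (\<bar>G s u\<bar> + (\<Sum>j\<in>UNIV. \<bar>D1 j s u\<bar>) + (\<Sum>i\<in>UNIV. \<Sum>j\<in>UNIV. \<bar>D2 i j s u\<bar>)
          + \<bar>Gt s u\<bar> + (\<Sum>j\<in>UNIV. \<bar>E1 j s u\<bar>) + (\<Sum>i\<in>UNIV. \<Sum>j\<in>UNIV. \<bar>E2 i j s u\<bar>)) \<le> B))"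

definition S_gamma :: "real \<Rightarrow> real \<Rightarrow> (real \<Rightarrow> real^'n::finite \<Rightarrow> real) \<Rightarrow> bool" where
  "S_gamma T \<gamma> H \<longleftrightarrow> (if \<gamma> \<le> 1 \<or> CARD('n) \<ge> 2 then C12c T H else S12 T H)"

text \<open>The double lattice sum, as an extended nonnegative real (it may a priori be infinite).\<close>

definition dsum :: "real \<Rightarrow> (real \<Rightarrow> real^'n::finite \<Rightarrow> real) \<Rightarrow> nat \<Rightarrow> real \<Rightarrow> ennreal" where
  "dsum \<gamma> H n s = (\<Sum>\<^sub>\<infinity>(x, y) \<in> lattice \<times> lattice.
      ennreal ((H s ((1 / real n) *\<^sub>R y) - H s ((1 / real n) *\<^sub>R x))\<^sup>2 * p_gamma \<gamma> (y - x)))"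

end

theory Submission
  imports Defs
begin

(*
  The squared increments of H s are dominated by A min(|b - a|^2, 1) (\<Phi> a + \<Phi> b) for a weight
  \<Phi> whose lattice Riemann sums at mesh 1/n are O(n^d): for compactly supported H the indicator
  of a ball, in the rapidly decaying case \<Phi> u = (1 + |u|)^-(d+1). Summing over y with x fixed
  leaves the kernel sum over z of min(|z|^2/n^2, 1) |z|^-(d+\<gamma>), which is O(n^-\<gamma>) because the
  sup-norm sphere of radius k contains O(k^(d-1)) lattice points: splitting at k = n, the inner
  part is n^-2 times the sum of k^(1-\<gamma>), which is O(n^-\<gamma>) as \<gamma> < 2, and the tail sum of
  k^(-1-\<gamma>) is O(n^-\<gamma>) as \<gamma> > 0. Hence the double sum is O(n^(d-\<gamma>)) and the normalised
  supremum is O(n^-d).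
*)

section \<open>Lattice points in sup-norm spheres\<close>

lemma infnorm_cart_Max: "infnorm (x :: real^'n::finite) = Max (range (\<lambda>i. \<bar>x $ i\<bar>))"
  unfolding infnorm_cart by (subst cSup_eq_Max) (auto simp: full_SetCompr_eq)

lemma infnorm_le_iff_cart: "infnorm (x :: real^'n::finite) \<le> r \<longleftrightarrow> (\<forall>i. \<bar>x $ i\<bar> \<le> r)"
  unfolding infnorm_cart_Max by (subst Max_le_iff) auto

lemma infnorm_lattice_Ints: "x \<in> lattice \<Longrightarrow> infnorm x \<in> \<int>"
proof -
  assume "x \<in> lattice"
  moreover have "infnorm x \<in> range (\<lambda>i. \<bar>x $ i\<bar>)"
    unfolding infnorm_cart_Max by (rule Max_in) auto
  ultimately show ?thesis by (auto simp: lattice_def)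
qed

lemma lattice_diff: "x \<in> lattice \<Longrightarrow> y \<in> lattice \<Longrightarrow> y - x \<in> lattice"
  unfolding lattice_def by auto

definition lattice_radius :: "real^'n::finite \<Rightarrow> nat" where
  "lattice_radius x = nat \<lfloor>infnorm x\<rfloor>"

lemma lattice_radius_eq: "x \<in> lattice \<Longrightarrow> real (lattice_radius x) = infnorm x"
  unfolding lattice_radius_def using infnorm_lattice_Ints[of x] infnorm_pos_le[of x]
  by (metis Ints_cases floor_of_int of_int_0_le_iff of_nat_nat)

lemma card_lattice_ball:
  "card {x \<in> (lattice :: (real^'n::finite) set). infnorm x \<le> real k} = (2 * k + 1) ^ CARD('n)"
proof -
  let ?P = "PiE (UNIV :: 'n set) (\<lambda>_. {-int k..int k})"
  let ?v = "\<lambda>f. \<chi> i. real_of_int (f i) :: real^'n"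
  let ?B = "{x \<in> (lattice :: (real^'n) set). infnorm x \<le> real k}"
  have "bij_betw ?v ?P ?B"
  proof (rule bij_betwI')
    fix f g assume "f \<in> ?P" "g \<in> ?P"
    then show "(?v f = ?v g) = (f = g)" by (auto simp: vec_eq_iff fun_eq_iff)
  next
    fix f assume "f \<in> ?P"
    have "\<bar>f i\<bar> \<le> int k" for i
    proof -
      have "f i \<in> {-int k..int k}" using \<open>f \<in> ?P\<close> by (auto simp: PiE_iff)
      then show ?thesis by (simp add: abs_le_iff)
    qed
    then show "?v f \<in> ?B"
      unfolding lattice_def infnorm_le_iff_cart
      by simp (metis of_int_abs of_int_le_iff of_int_of_nat_eq)
  next
    fix x :: "real^'n" assume x: "x \<in> ?B"
    define f where "f i = \<lfloor>x $ i\<rfloor>" for i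
    have f: "real_of_int (f i) = x $ i" for i
      using x unfolding f_def lattice_def by (metis (mono_tags) Ints_cases floor_of_int mem_Collect_eq)
    have "\<bar>f i\<bar> \<le> int k" for i
      using x f[of i] unfolding infnorm_le_iff_cart
      by (metis (mono_tags) mem_Collect_eq of_int_abs of_int_le_iff of_int_of_nat_eq)
    then have "f \<in> ?P" by (auto simp: PiE_iff abs_le_iff) (metis minus_le_iff)
    moreover have "x = ?v f" by (simp add: vec_eq_iff f)
    ultimately show "\<exists>f\<in>?P. x = ?v f" by blast
  qed
  then have "card ?B = card ?P"
    by (simp add: bij_betw_same_card)
  also have "\<dots> = (2 * k + 1) ^ CARD('n)"
    by (simp add: card_PiE nat_add_distrib nat_mult_distrib)
  finally show ?thesis .
qed

lemma finite_lattice_ball: "finite {x \<in> (lattice :: (real^'n::finite) set). infnorm x \<le> real k}"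
  by (rule card_ge_0_finite) (simp add: card_lattice_ball)

lemma diff_power_le:
  fixes a b :: real
  assumes "0 \<le> b" "b \<le> a"
  shows "a ^ Suc m - b ^ Suc m \<le> real (Suc m) * (a - b) * a ^ m"
proof (induction m)
  case (Suc m)
  have "a ^ Suc (Suc m) - b ^ Suc (Suc m) = a * (a ^ Suc m - b ^ Suc m) + b ^ Suc m * (a - b)"
    by (simp add: algebra_simps)
  also have "\<dots> \<le> a * (real (Suc m) * (a - b) * a ^ m) + a ^ Suc m * (a - b)"
    using Suc assms by (intro add_mono mult_left_mono mult_right_mono power_mono) auto
  also have "\<dots> = real (Suc (Suc m)) * (a - b) * a ^ Suc m"
    by (simp add: algebra_simps)
  finally show ?case .
qed simp

lemma card_lattice_sphere:
  assumes "k \<ge> 1"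
  shows "real (card {x \<in> (lattice :: (real^'n::finite) set). infnorm x = real k})
           \<le> 2 * real CARD('n) * 3 ^ (CARD('n) - 1) * real k ^ (CARD('n) - 1)"
proof -
  obtain j where k: "k = Suc j" using assms by (cases k) auto
  obtain m where m: "CARD('n) = Suc m" using zero_less_card_finite gr0_implies_Suc by blast
  let ?B = "\<lambda>r. {x \<in> (lattice :: (real^'n) set). infnorm x \<le> real r}"
  have "infnorm x = real k \<longleftrightarrow> infnorm x \<le> real k \<and> \<not> infnorm x \<le> real j"
    if "x \<in> lattice" for x :: "real^'n"
    unfolding lattice_radius_eq[OF that, symmetric] k by auto
  then have sphere: "{x \<in> (lattice :: (real^'n) set). infnorm x = real k} = ?B k - ?B j"
    by blast
  have sub: "?B j \<subseteq> ?B k" using k by auto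
  have "real (card (?B k - ?B j)) = real (card (?B k)) - real (card (?B j))"
    using card_mono[OF finite_lattice_ball sub] by (simp add: card_Diff_subset[OF finite_lattice_ball sub])
  also have "\<dots> = real (2 * k + 1) ^ Suc m - real (2 * j + 1) ^ Suc m"
    by (simp only: card_lattice_ball m of_nat_power)
  also have "\<dots> \<le> real (Suc m) * (real (2 * k + 1) - real (2 * j + 1)) * real (2 * k + 1) ^ m"
    using k by (intro diff_power_le) auto
  also have "\<dots> = real (Suc m) * 2 * real (2 * k + 1) ^ m"
    using k by simp
  also have "\<dots> \<le> real (Suc m) * 2 * (3 * real k) ^ m"
    using k by (intro mult_left_mono power_mono) auto
  finally show ?thesis
    unfolding sphere m by (simp add: power_mult_distrib algebra_simps)
qed

lemma card_lattice_radius_eq_le: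
  fixes Z :: "(real^'n::finite) set"
  assumes "Z \<subseteq> lattice" "1 \<le> k"
  shows "real (card {z \<in> Z. lattice_radius z = k})
           \<le> 2 * real CARD('n) * 3 ^ (CARD('n) - 1) * real k ^ (CARD('n) - 1)"
proof -
  have "{z \<in> Z. lattice_radius z = k} \<subseteq> {x \<in> lattice. infnorm x = real k}"
    using assms by (auto simp flip: lattice_radius_eq)
  moreover have "finite {x \<in> (lattice :: (real^'n) set). infnorm x = real k}"
    by (rule finite_subset[OF _ finite_lattice_ball[of k]]) auto
  ultimately have "card {z \<in> Z. lattice_radius z = k} \<le> card {x \<in> (lattice :: (real^'n) set). infnorm x = real k}"
    by (rule card_mono[rotated])
  then show ?thesis
    using card_lattice_sphere[OF assms(2), where 'n='n] by linarith
qed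

lemma lattice_radial_sum_le:
  fixes F :: "nat \<Rightarrow> real" and Z :: "(real^'n::finite) set"
  assumes F: "\<And>k. 0 \<le> F k"
    and S: "\<And>N. (\<Sum>k=1..N. real k ^ (CARD('n) - 1) * F k) \<le> S"
    and Z: "finite Z" "Z \<subseteq> lattice"
  shows "(\<Sum>z\<in>Z. F (lattice_radius z)) \<le> F 0 + 2 * real CARD('n) * 3 ^ (CARD('n) - 1) * S"
proof -
  let ?c = "2 * real CARD('n) * 3 ^ (CARD('n) - 1)"
  let ?Z = "\<lambda>k. {z \<in> Z. lattice_radius z = k}"
  define N where "N = Max (insert 0 (lattice_radius ` Z))"
  have "lattice_radius ` Z \<subseteq> {0..N}"
    using Z unfolding N_def by auto
  then have "(\<Sum>z\<in>Z. F (lattice_radius z)) = (\<Sum>k=0..N. \<Sum>z\<in>?Z k. F (lattice_radius z))"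
    using Z by (intro sum.group[symmetric]) auto
  also have "\<dots> = (\<Sum>k=0..N. real (card (?Z k)) * F k)"
    by (intro sum.cong refl) simp
  also have "\<dots> = real (card (?Z 0)) * F 0 + (\<Sum>k=1..N. real (card (?Z k)) * F k)"
    by (simp add: sum.atLeast_Suc_atMost)
  also have "real (card (?Z 0)) * F 0 \<le> F 0"
  proof -
    have "?Z 0 \<subseteq> {0}"
    proof
      fix z assume "z \<in> ?Z 0"
      then have "infnorm z = 0"
        using Z lattice_radius_eq[of z] by auto
      then show "z \<in> {0}"
        by (simp add: infnorm_eq_0)
    qed
    then have "card (?Z 0) \<le> 1"
      using card_mono[of "{0}" "?Z 0"] by simp
    then show ?thesis
      using F[of 0] by (simp add: mult_left_le_one_le)
  qed
  also have "(\<Sum>k=1..N. real (card (?Z k)) * F k) \<le> (\<Sum>k=1..N. ?c * (real k ^ (CARD('n) - 1) * F k))"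
  proof (rule sum_mono)
    fix k assume "k \<in> {1..N}"
    then show "real (card (?Z k)) * F k \<le> ?c * (real k ^ (CARD('n) - 1) * F k)"
      using F[of k] card_lattice_radius_eq_le[OF Z(2), of k]
      by (simp add: mult_right_mono mult.assoc[symmetric])
  qed
  also have "\<dots> \<le> ?c * S"
    using S[of N] by (simp add: sum_distrib_left[symmetric] mult_left_mono)
  finally show ?thesis by simp
qed

section \<open>Elementary estimates for powers\<close>

lemma powr_diff_quotient_ge:
  fixes a b p :: real
  assumes "0 < a" "a \<le> b" "p \<le> 1" "p \<noteq> 0"
  shows "(b - a) * b powr (p - 1) \<le> (b powr p - a powr p) / p"
proof (cases "a = b")
  case False
  have "\<exists>z>a. z < b \<and> b powr p - a powr p = (b - a) * (p * z powr (p - 1))"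
    by (rule MVT2) (use assms False in \<open>auto intro!: has_real_derivative_powr\<close>)
  then obtain z where z: "a < z" "z < b" "b powr p - a powr p = (b - a) * (p * z powr (p - 1))"
    by blast
  have "b powr (p - 1) \<le> z powr (p - 1)"
    using z assms by (intro powr_mono2') auto
  then show ?thesis
    using z assms by (simp add: mult_left_mono)
qed simp

lemma sum_powr_le:
  fixes p :: real
  assumes "0 < p"
  shows "(\<Sum>k=1..n. real k powr (p - 1)) \<le> (1 + 1 / p) * real n powr p"
proof (cases "p \<le> 1")
  case True
  have "(\<Sum>k=1..N. real k powr (p - 1)) \<le> real N powr p / p" for N
  proof (induction N)
    case (Suc N)
    have "real (Suc N) powr (p - 1) \<le> (real (Suc N) powr p - real N powr p) / p"
    proof (cases "N = 0")
      case False
      then show ?thesis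
        using powr_diff_quotient_ge[of "real N" "real (Suc N)" p] True assms by simp
    qed (use True assms in simp)
    then show ?case
      using Suc by (simp add: diff_divide_distrib)
  qed simp
  moreover have "real n powr p / p \<le> (1 + 1 / p) * real n powr p"
    by (simp add: ring_distribs)
  ultimately show ?thesis
    by (rule order_trans)
next
  case False
  have "(\<Sum>k=1..n. real k powr (p - 1)) \<le> (\<Sum>k=1..n. real n powr (p - 1))"
    using False by (intro sum_mono powr_mono2) auto
  also have "\<dots> = real n powr p"
    by (cases "n = 0") (simp_all add: powr_mult_base)
  also have "\<dots> \<le> (1 + 1 / p) * real n powr p"
    using assms by (simp add: ring_distribs)
  finally show ?thesis .
qed

lemma sum_powr_tail_le:
  fixes q :: real
  assumes "0 < q" "1 \<le> n"
  shows "(\<Sum>k\<in>{n<..N}. real k powr (- 1 - q)) \<le> real n powr (- q) / q"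
proof (cases "n \<le> N")
  case True
  then have "(\<Sum>k\<in>{n<..N}. real k powr (- 1 - q)) \<le> (real n powr (- q) - real N powr (- q)) / q"
  proof (induction N rule: dec_induct)
    case (step N)
    have "(real (Suc N) - real N) * real (Suc N) powr (- q - 1)
        \<le> (real (Suc N) powr (- q) - real N powr (- q)) / (- q)"
      using step assms by (intro powr_diff_quotient_ge) auto
    then have "real (Suc N) powr (- 1 - q) \<le> (real N powr (- q) - real (Suc N) powr (- q)) / q"
      using assms unfolding minus_diff_commute[of q 1] by (simp add: field_simps)
    moreover have "{n<..Suc N} = insert (Suc N) {n<..N}"
      using step by auto
    ultimately show ?case
      using step by (simp add: diff_divide_distrib)
  qed simp
  also have "\<dots> \<le> real n powr (- q) / q"
    using assms by (simp add: divide_right_mono)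
  finally show ?thesis .
qed (use assms in simp)

lemma sum_shifted_inverse_square_le:
  fixes x :: real
  assumes "0 < x"
  shows "(\<Sum>k=1..N. (x / (x + real k))\<^sup>2) \<le> x"
proof -
  have "(\<Sum>k=1..N. (x / (x + real k))\<^sup>2) \<le> x - x\<^sup>2 / (x + real N)"
  proof (induction N)
    case 0
    then show ?case using assms by (simp add: power2_eq_square)
  next
    case (Suc N)
    have p: "0 < x + real N" using assms by simp
    have "(x / (x + real (Suc N)))\<^sup>2 \<le> x\<^sup>2 / ((x + real N) * (x + real (Suc N)))"
      using p by (simp add: power_divide power2_eq_square divide_left_mono mult_pos_pos)
    also have "\<dots> = x\<^sup>2 / (x + real N) - x\<^sup>2 / (x + real (Suc N))"
      using p by (simp add: field_simps)
    finally show ?case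
      using Suc by simp
  qed
  also have "\<dots> \<le> x"
    using assms by simp
  finally show ?thesis .
qed

lemma one_plus_powr_le_r_n:
  assumes n: "2 \<le> n"
  shows "1 + real n powr (\<gamma> - 1) \<le> (2 + 2 / ln 2) * r_n \<gamma> n"
proof -
  have ln2: "0 < ln (2::real)"
    by simp
  consider "\<gamma> < 1" | "\<gamma> = 1" | "1 < \<gamma>"
    by linarith
  then show ?thesis
  proof cases
    case 1
    then have "real n powr (\<gamma> - 1) \<le> 1 powr (\<gamma> - 1)"
      using n by (intro powr_mono2') auto
    then show ?thesis
      using 1 ln2 unfolding r_n_def by (simp add: add_increasing2)
  next
    case 2
    have "2 = (2 / ln 2) * ln (2::real)"
      using ln2 by simp
    also have "\<dots> \<le> (2 / ln 2) * ln (real n)"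
      using n ln2 by (intro mult_left_mono) auto
    also have "\<dots> \<le> (2 + 2 / ln 2) * ln (real n)"
      using n by (intro mult_right_mono) auto
    finally show ?thesis
      using 2 n unfolding r_n_def by simp
  next
    case 3
    then have "1 \<le> real n powr (\<gamma> - 1)"
      using n by (intro ge_one_powr_ge_zero) auto
    then have "1 + real n powr (\<gamma> - 1) \<le> 2 * real n powr (\<gamma> - 1)"
      by simp
    also have "\<dots> \<le> (2 + 2 / ln 2) * real n powr (\<gamma> - 1)"
      using ln2 by (intro mult_right_mono) auto
    finally show ?thesis
      using 3 unfolding r_n_def by simp
  qed
qed

lemma r_n_bound:
  assumes n: "2 \<le> n"
  shows "(real n + real n powr \<gamma>) / real n ^ 2 \<le> (2 + 2 / ln 2) * r_n \<gamma> n / real n"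
proof -
  have "real n + real n powr \<gamma> = real n * (1 + real n powr (\<gamma> - 1))"
    using n by (simp add: distrib_left powr_mult_base)
  then have "(real n + real n powr \<gamma>) / real n ^ 2 = (1 + real n powr (\<gamma> - 1)) / real n"
    using n by (simp add: power2_eq_square)
  also have "\<dots> \<le> (2 + 2 / ln 2) * r_n \<gamma> n / real n"
    using one_plus_powr_le_r_n[OF n] by (simp add: divide_right_mono)
  finally show ?thesis .
qed

lemma rate_of_inverse_power_bound:
  fixes X :: "nat \<Rightarrow> ennreal" and C \<gamma> :: real
  assumes C: "0 \<le> C" and X: "\<And>n. 1 \<le> n \<Longrightarrow> X n \<le> ennreal (C / real n ^ d)" and d: "0 < d"
  shows "\<exists>C'>0. \<forall>n::nat. n \<ge> 1 \<longrightarrow>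
           X n \<le> ennreal (C' * (real n + real n powr \<gamma>) / real n ^ (d + 1))
         \<and> C' * (real n + real n powr \<gamma>) / real n ^ (d + 1) \<le> C' * (real n + real n powr \<gamma>) / real n ^ 2"
proof (intro exI[of _ "C + 1"] conjI allI impI)
  fix n :: nat assume n: "1 \<le> n"
  have "C / real n ^ d = C * real n / real n ^ (d + 1)"
    using n by simp
  also have "\<dots> \<le> (C + 1) * (real n + real n powr \<gamma>) / real n ^ (d + 1)"
    using C n by (intro divide_right_mono mult_mono) auto
  finally show "X n \<le> ennreal ((C + 1) * (real n + real n powr \<gamma>) / real n ^ (d + 1))"
    using X[OF n] by (meson ennreal_leI order_trans)
  show "(C + 1) * (real n + real n powr \<gamma>) / real n ^ (d + 1) \<le> (C + 1) * (real n + real n powr \<gamma>) / real n ^ 2"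
    using C n d by (intro divide_left_mono power_increasing) auto
qed (use C in simp)

section \<open>The jump kernel summed over the lattice\<close>

lemma sum_min_split_le:
  fixes a b :: "nat \<Rightarrow> real"
  assumes "\<And>k. 0 \<le> a k"
  shows "(\<Sum>k=1..N. min (a k) (b k)) \<le> (\<Sum>k=1..n. a k) + (\<Sum>k\<in>{n<..N}. b k)"
proof -
  have "(\<Sum>k\<in>{1..min N n} \<union> {n<..N}. min (a k) (b k))
      = (\<Sum>k=1..min N n. min (a k) (b k)) + (\<Sum>k\<in>{n<..N}. min (a k) (b k))"
    by (rule sum.union_disjoint) auto
  moreover have "{1..min N n} \<union> {n<..N} = {1..N}"
    by auto
  ultimately have "(\<Sum>k=1..N. min (a k) (b k))
      = (\<Sum>k=1..min N n. min (a k) (b k)) + (\<Sum>k\<in>{n<..N}. min (a k) (b k))"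
    by simp
  also have "\<dots> \<le> (\<Sum>k=1..min N n. a k) + (\<Sum>k\<in>{n<..N}. b k)"
    by (intro add_mono sum_mono) auto
  also have "(\<Sum>k=1..min N n. a k) \<le> (\<Sum>k=1..n. a k)"
    using assms by (intro sum_mono2) auto
  finally show ?thesis
    by simp
qed

lemma kernel_le_radial:
  fixes z :: "real^'n::finite"
  assumes z: "z \<in> lattice" and "0 \<le> \<gamma>"
  shows "min ((norm z / y)\<^sup>2) 1 * norm z powr (- (real CARD('n) + \<gamma>))
    \<le> min (real CARD('n) * (real (lattice_radius z) / y)\<^sup>2) 1
        * real (lattice_radius z) powr (- (real CARD('n) + \<gamma>))"
proof (cases "z = 0")
  case False
  let ?d = "real CARD('n)"
  have "0 < infnorm z"
    using False infnorm_pos_lt by blast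
  have "norm z \<le> sqrt ?d * infnorm z"
    using norm_le_infnorm[of z] by simp
  then have "(norm z)\<^sup>2 \<le> ?d * (infnorm z)\<^sup>2"
    using power_mono[of "norm z" "sqrt ?d * infnorm z" 2] by (simp add: power_mult_distrib)
  then have "min ((norm z / y)\<^sup>2) 1 \<le> min (?d * (infnorm z / y)\<^sup>2) 1"
    by (intro min.mono) (auto simp: power_divide divide_right_mono)
  then show ?thesis
    unfolding lattice_radius_eq[OF z] using assms infnorm_le_norm[of z] \<open>0 < infnorm z\<close>
    by (intro mult_mono powr_mono2') auto
qed simp

lemma radial_kernel_eq:
  fixes x y :: real
  assumes "0 < x"
  shows "x ^ (CARD('n::finite) - 1) * (min (real CARD('n) * (x / y)\<^sup>2) 1 * x powr (- (real CARD('n) + \<gamma>)))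
    = min (real CARD('n) / y\<^sup>2 * x powr (1 - \<gamma>)) (x powr (- 1 - \<gamma>))"
proof -
  have "real (CARD('n) - 1) = real CARD('n) - 1"
    by (simp add: of_nat_diff)
  then have "x ^ (CARD('n) - 1) * x powr (- (real CARD('n) + \<gamma>)) = x powr (- 1 - \<gamma>)"
    using assms by (simp add: powr_realpow[symmetric] powr_add[symmetric])
  then have "x ^ (CARD('n) - 1) * (min (real CARD('n) * (x / y)\<^sup>2) 1 * x powr (- (real CARD('n) + \<gamma>)))
      = min (real CARD('n) * (x / y)\<^sup>2) 1 * x powr (- 1 - \<gamma>)"
    by (simp add: ac_simps)
  also have "\<dots> = min (real CARD('n) * (x / y)\<^sup>2 * x powr (- 1 - \<gamma>)) (x powr (- 1 - \<gamma>))"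
    by (simp add: min_mult_distrib_right)
  also have "real CARD('n) * (x / y)\<^sup>2 * x powr (- 1 - \<gamma>) = real CARD('n) / y\<^sup>2 * x powr (1 - \<gamma>)"
    using assms powr_add[of x 2 "- 1 - \<gamma>"] by (simp add: power_divide)
  finally show ?thesis .
qed

lemma lattice_kernel_sum_le:
  fixes \<gamma> :: real
  assumes "0 < \<gamma>" "\<gamma> < 2"
  obtains K where "0 \<le> K"
    and "\<And>n Z. 1 \<le> n \<Longrightarrow> finite Z \<Longrightarrow> Z \<subseteq> (lattice :: (real^'n::finite) set) \<Longrightarrow>
          (\<Sum>z\<in>Z. min ((norm z / real n)\<^sup>2) 1 * norm z powr (- (real CARD('n) + \<gamma>)))
            \<le> K * real n powr (- \<gamma>)"
proof
  let ?d = "real CARD('n)"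
  let ?c = "2 * ?d * 3 ^ (CARD('n) - 1)"
  define A where "A = ?d * (1 + 1 / (2 - \<gamma>)) + 1 / \<gamma>"
  show "0 \<le> ?c * A"
    using assms unfolding A_def by simp
  fix n :: nat and Z :: "(real^'n) set"
  assume n: "1 \<le> n" and Z: "finite Z" "Z \<subseteq> lattice"
  define F where "F k = min (?d * (real k / real n)\<^sup>2) 1 * real k powr (- (?d + \<gamma>))" for k :: nat
  have "(\<Sum>k=1..N. real k ^ (CARD('n) - 1) * F k) \<le> A * real n powr (- \<gamma>)" for N
  proof -
    have "(\<Sum>k=1..N. real k ^ (CARD('n) - 1) * F k)
        = (\<Sum>k=1..N. min (?d / (real n)\<^sup>2 * real k powr (1 - \<gamma>)) (real k powr (- 1 - \<gamma>)))"
      unfolding F_def by (intro sum.cong refl radial_kernel_eq) auto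
    also have "\<dots> \<le> (\<Sum>k=1..n. ?d / (real n)\<^sup>2 * real k powr (1 - \<gamma>)) + (\<Sum>k\<in>{n<..N}. real k powr (- 1 - \<gamma>))"
      by (rule sum_min_split_le) simp
    also have "\<dots> \<le> ?d / (real n)\<^sup>2 * ((1 + 1 / (2 - \<gamma>)) * real n powr (2 - \<gamma>)) + real n powr (- \<gamma>) / \<gamma>"
      unfolding sum_distrib_left[symmetric] using sum_powr_le[of "2 - \<gamma>" n] assms n
      by (intro add_mono mult_left_mono sum_powr_tail_le) auto
    also have "\<dots> = ?d * (1 + 1 / (2 - \<gamma>)) * real n powr (- \<gamma>) + real n powr (- \<gamma>) / \<gamma>"
      using n powr_diff[of "real n" "2 - \<gamma>" 2] by simp
    also have "\<dots> = A * real n powr (- \<gamma>)"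
      unfolding A_def by (simp add: distrib_right)
    finally show ?thesis .
  qed
  then have "(\<Sum>z\<in>Z. F (lattice_radius z)) \<le> F 0 + ?c * (A * real n powr (- \<gamma>))"
    using Z by (intro lattice_radial_sum_le) (auto simp: F_def)
  moreover have "(\<Sum>z\<in>Z. min ((norm z / real n)\<^sup>2) 1 * norm z powr (- (?d + \<gamma>))) \<le> (\<Sum>z\<in>Z. F (lattice_radius z))"
    unfolding F_def using Z assms by (intro sum_mono kernel_le_radial) auto
  ultimately show "(\<Sum>z\<in>Z. min ((norm z / real n)\<^sup>2) 1 * norm z powr (- (?d + \<gamma>))) \<le> ?c * A * real n powr (- \<gamma>)"
    by (simp add: F_def)
qed

lemma sum_pairs_difference_weighted_le:
  fixes \<Phi> w :: "'a::ab_group_add \<Rightarrow> real"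
  assumes \<Phi>: "\<And>x. 0 \<le> \<Phi> x" and w: "\<And>z. 0 \<le> w z"
    and S: "\<And>x y. x \<in> S \<Longrightarrow> y \<in> S \<Longrightarrow> y - x \<in> S"
    and \<Phi>_sum: "\<And>X. finite X \<Longrightarrow> X \<subseteq> S \<Longrightarrow> sum \<Phi> X \<le> P"
    and w_sum: "\<And>Z. finite Z \<Longrightarrow> Z \<subseteq> S \<Longrightarrow> sum w Z \<le> W"
    and F: "finite F" "F \<subseteq> S \<times> S"
  shows "(\<Sum>(x, y)\<in>F. (\<Phi> x + \<Phi> y) * w (y - x)) \<le> 2 * P * W"
proof -
  define X where "X = fst ` F"
  define Y where "Y = snd ` F"
  have X: "finite X" "X \<subseteq> S" and Y: "finite Y" "Y \<subseteq> S"
    using F unfolding X_def Y_def by auto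
  have "0 \<le> W"
    using w_sum[of "{}"] by simp
  have w_left: "(\<Sum>y\<in>Y. w (y - x)) \<le> W" if "x \<in> X" for x
  proof -
    have "(\<Sum>y\<in>Y. w (y - x)) = (\<Sum>z\<in>(\<lambda>y. y - x) ` Y. w z)"
      by (simp add: sum.reindex inj_on_def)
    also have "\<dots> \<le> W"
      using X Y that S by (intro w_sum) auto
    finally show ?thesis .
  qed
  have w_right: "(\<Sum>x\<in>X. w (y - x)) \<le> W" if "y \<in> Y" for y
  proof -
    have "(\<Sum>x\<in>X. w (y - x)) = (\<Sum>z\<in>(\<lambda>x. y - x) ` X. w z)"
      by (simp add: sum.reindex inj_on_def)
    also have "\<dots> \<le> W"
      using X Y that S by (intro w_sum) auto
    finally show ?thesis .
  qed
  have "(\<Sum>(x, y)\<in>F. (\<Phi> x + \<Phi> y) * w (y - x)) \<le> (\<Sum>(x, y)\<in>X \<times> Y. (\<Phi> x + \<Phi> y) * w (y - x))"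
    using X Y \<Phi> w by (intro sum_mono2) (force simp: X_def Y_def)+
  also have "\<dots> = (\<Sum>x\<in>X. \<Phi> x * (\<Sum>y\<in>Y. w (y - x))) + (\<Sum>y\<in>Y. \<Phi> y * (\<Sum>x\<in>X. w (y - x)))"
    by (simp add: sum.cartesian_product[symmetric] distrib_right sum.distrib sum_distrib_left
        sum.swap[of _ X Y])
  also have "\<dots> \<le> (\<Sum>x\<in>X. \<Phi> x * W) + (\<Sum>y\<in>Y. \<Phi> y * W)"
    using w_left w_right \<Phi> by (intro add_mono sum_mono mult_left_mono) auto
  also have "\<dots> \<le> P * W + P * W"
    using \<Phi>_sum[OF X] \<Phi>_sum[OF Y] \<open>0 \<le> W\<close>
    by (intro add_mono) (simp_all add: sum_distrib_right[symmetric] mult_right_mono)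
  finally show ?thesis
    by simp
qed

lemma infsum_pairs_difference_weighted_le:
  fixes \<Phi> w :: "'a::ab_group_add \<Rightarrow> real"
  assumes \<Phi>: "\<And>x. 0 \<le> \<Phi> x" and w: "\<And>z. 0 \<le> w z"
    and S: "\<And>x y. x \<in> S \<Longrightarrow> y \<in> S \<Longrightarrow> y - x \<in> S"
    and \<Phi>_sum: "\<And>X. finite X \<Longrightarrow> X \<subseteq> S \<Longrightarrow> sum \<Phi> X \<le> P"
    and w_sum: "\<And>Z. finite Z \<Longrightarrow> Z \<subseteq> S \<Longrightarrow> sum w Z \<le> W"
  shows "(\<Sum>\<^sub>\<infinity>(x, y)\<in>S \<times> S. ennreal ((\<Phi> x + \<Phi> y) * w (y - x))) \<le> ennreal (2 * P * W)"
proof (rule infsum_le_finite_sums)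
  fix F assume "finite F" "F \<subseteq> S \<times> S"
  then have "(\<Sum>(x, y)\<in>F. (\<Phi> x + \<Phi> y) * w (y - x)) \<le> 2 * P * W"
    using assms by (intro sum_pairs_difference_weighted_le)
  then show "(\<Sum>p\<in>F. case p of (x, y) \<Rightarrow> ennreal ((\<Phi> x + \<Phi> y) * w (y - x))) \<le> ennreal (2 * P * W)"
    using \<Phi> w by (simp add: case_prod_unfold sum_ennreal ennreal_leI)
qed (auto intro: nonneg_summable_on_complete)

definition increment_envelope ::
    "real \<Rightarrow> (real \<Rightarrow> real^'n::finite \<Rightarrow> real) \<Rightarrow> real \<Rightarrow> (real^'n \<Rightarrow> real) \<Rightarrow> bool" where
  "increment_envelope T H A \<Phi> \<longleftrightarrow>
     0 \<le> A \<and> (\<forall>u. 0 \<le> \<Phi> u) \<and>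
     (\<forall>n\<ge>1. \<forall>X. finite X \<and> X \<subseteq> lattice \<longrightarrow>
        (\<Sum>x\<in>X. \<Phi> ((1 / real n) *\<^sub>R x)) \<le> A * real n ^ CARD('n)) \<and>
     (\<forall>s\<in>{0..T}. \<forall>a b. (H s b - H s a)\<^sup>2 \<le> A * min ((norm (b - a))\<^sup>2) 1 * (\<Phi> a + \<Phi> b))"

(* Only |c_gamma| enters the bounds. *)
lemma p_gamma_le: "p_gamma \<gamma> z \<le> \<bar>c_gamma \<gamma> TYPE('n)\<bar> * norm z powr (- (real CARD('n) + \<gamma>))"
  for z :: "real^'n::finite"
  unfolding p_gamma_def by (auto intro: mult_right_mono)

lemma dsum_term_le_envelope:
  fixes H :: "real \<Rightarrow> real^'n::finite \<Rightarrow> real" and x y :: "real^'n"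
  assumes "increment_envelope T H A \<Phi>" "s \<in> {0..T}" "1 \<le> n"
  defines "h u \<equiv> H s ((1 / real n) *\<^sub>R u)" and "\<phi> u \<equiv> \<Phi> ((1 / real n) *\<^sub>R u)"
  shows "(h y - h x)\<^sup>2 * p_gamma \<gamma> (y - x)
    \<le> A * \<bar>c_gamma \<gamma> TYPE('n)\<bar> * ((\<phi> x + \<phi> y)
        * (min ((norm (y - x) / real n)\<^sup>2) 1 * norm (y - x) powr (- (real CARD('n) + \<gamma>))))"
proof -
  have "norm ((1 / real n) *\<^sub>R y - (1 / real n) *\<^sub>R x) = norm (y - x) / real n"
    using assms(3) by (simp flip: scaleR_diff_right)
  then have incr: "(h y - h x)\<^sup>2 \<le> A * min ((norm (y - x) / real n)\<^sup>2) 1 * (\<phi> x + \<phi> y)"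
    using assms(1,2) unfolding increment_envelope_def h_def \<phi>_def by metis
  have "(h y - h x)\<^sup>2 * p_gamma \<gamma> (y - x)
      \<le> (h y - h x)\<^sup>2 * (\<bar>c_gamma \<gamma> TYPE('n)\<bar> * norm (y - x) powr (- (real CARD('n) + \<gamma>)))"
    by (intro mult_left_mono p_gamma_le) simp
  also have "\<dots> \<le> A * min ((norm (y - x) / real n)\<^sup>2) 1 * (\<phi> x + \<phi> y)
      * (\<bar>c_gamma \<gamma> TYPE('n)\<bar> * norm (y - x) powr (- (real CARD('n) + \<gamma>)))"
    by (intro mult_right_mono incr) simp
  finally show ?thesis
    by (simp add: ac_simps)
qed

lemma dsum_le_envelope:
  fixes H :: "real \<Rightarrow> real^'n::finite \<Rightarrow> real"
  assumes env: "increment_envelope T H A \<Phi>" and "0 < \<gamma>" "\<gamma> < 2"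
  obtains C where "0 \<le> C"
    and "\<And>n s. 1 \<le> n \<Longrightarrow> s \<in> {0..T} \<Longrightarrow>
           dsum \<gamma> H n s \<le> ennreal (C * real n ^ CARD('n) * real n powr (- \<gamma>))"
proof -
  let ?c = "\<bar>c_gamma \<gamma> TYPE('n)\<bar>"
  obtain K where K: "0 \<le> K"
    and kernel: "\<And>n Z. 1 \<le> n \<Longrightarrow> finite Z \<Longrightarrow> Z \<subseteq> (lattice :: (real^'n) set) \<Longrightarrow>
          (\<Sum>z\<in>Z. min ((norm z / real n)\<^sup>2) 1 * norm z powr (- (real CARD('n) + \<gamma>)))
            \<le> K * real n powr (- \<gamma>)"
    using lattice_kernel_sum_le[OF assms(2,3)] by blast
  have A: "0 \<le> A" and \<Phi>: "\<And>u. 0 \<le> \<Phi> u"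
    and \<Phi>_sum: "\<And>n X. 1 \<le> n \<Longrightarrow> finite X \<Longrightarrow> X \<subseteq> lattice \<Longrightarrow>
          (\<Sum>x\<in>X. \<Phi> ((1 / real n) *\<^sub>R x)) \<le> A * real n ^ CARD('n)"
    using env unfolding increment_envelope_def by blast+
  show ?thesis
  proof
    show "0 \<le> 2 * (A * ?c * A) * K"
      using A K by simp
    fix n :: nat and s :: real
    assume n: "1 \<le> n" and s: "s \<in> {0..T}"
    define \<phi> where "\<phi> x = A * ?c * \<Phi> ((1 / real n) *\<^sub>R x)" for x :: "real^'n"
    define w where "w z = min ((norm z / real n)\<^sup>2) 1 * norm z powr (- (real CARD('n) + \<gamma>))"
      for z :: "real^'n"
    have "(H s ((1 / real n) *\<^sub>R y) - H s ((1 / real n) *\<^sub>R x))\<^sup>2 * p_gamma \<gamma> (y - x)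
        \<le> (\<phi> x + \<phi> y) * w (y - x)" for x y
    proof -
      have "(\<phi> x + \<phi> y) * w (y - x)
          = A * ?c * ((\<Phi> ((1 / real n) *\<^sub>R x) + \<Phi> ((1 / real n) *\<^sub>R y))
              * (min ((norm (y - x) / real n)\<^sup>2) 1 * norm (y - x) powr (- (real CARD('n) + \<gamma>))))"
        unfolding \<phi>_def w_def by (simp add: algebra_simps)
      then show ?thesis
        using dsum_term_le_envelope[OF env s n] by (simp only:)
    qed
    then have "dsum \<gamma> H n s \<le> (\<Sum>\<^sub>\<infinity>(x, y)\<in>lattice \<times> lattice. ennreal ((\<phi> x + \<phi> y) * w (y - x)))"
      unfolding dsum_def by (intro infsum_mono nonneg_summable_on_complete) (auto intro: ennreal_leI)
    also have "\<dots> \<le> ennreal (2 * (A * ?c * (A * real n ^ CARD('n))) * (K * real n powr (- \<gamma>)))"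
    proof (rule infsum_pairs_difference_weighted_le)
      show "sum \<phi> X \<le> A * ?c * (A * real n ^ CARD('n))" if "finite X" "X \<subseteq> lattice" for X
        using \<Phi>_sum[OF n that] A unfolding \<phi>_def by (simp add: sum_distrib_left[symmetric] mult_left_mono)
    qed (use A \<Phi> n kernel lattice_diff in \<open>auto simp: \<phi>_def w_def\<close>)
    finally show "dsum \<gamma> H n s \<le> ennreal (2 * (A * ?c * A) * K * real n ^ CARD('n) * real n powr (- \<gamma>))"
      by (simp add: ac_simps)
  qed
qed

lemma scaled_sup_dsum_le:
  fixes H :: "real \<Rightarrow> real^'n::finite \<Rightarrow> real"
  assumes "increment_envelope T H A \<Phi>" and "0 < \<gamma>" "\<gamma> < 2"
  obtains C where "0 \<le> C"
    and "\<And>n. 1 \<le> n \<Longrightarrow> ennreal (real n powr \<gamma> / real n ^ (2 * CARD('n))) * (SUP s\<in>{0..T}. dsum \<gamma> H n s)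
           \<le> ennreal (C / real n ^ CARD('n))"
proof -
  obtain C where C: "0 \<le> C"
    and dsum: "\<And>n s. 1 \<le> n \<Longrightarrow> s \<in> {0..T} \<Longrightarrow>
           dsum \<gamma> H n s \<le> ennreal (C * real n ^ CARD('n) * real n powr (- \<gamma>))"
    using dsum_le_envelope[OF assms] by blast
  have "ennreal (real n powr \<gamma> / real n ^ (2 * CARD('n))) * (SUP s\<in>{0..T}. dsum \<gamma> H n s)
      \<le> ennreal (C / real n ^ CARD('n))" if n: "1 \<le> n" for n
  proof -
    have "(SUP s\<in>{0..T}. dsum \<gamma> H n s) \<le> ennreal (C * real n ^ CARD('n) * real n powr (- \<gamma>))"
      by (rule SUP_least) (rule dsum[OF n])
    then have "ennreal (real n powr \<gamma> / real n ^ (2 * CARD('n))) * (SUP s\<in>{0..T}. dsum \<gamma> H n s)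
        \<le> ennreal (real n powr \<gamma> / real n ^ (2 * CARD('n))) * ennreal (C * real n ^ CARD('n) * real n powr (- \<gamma>))"
      by (rule mult_left_mono) simp
    also have "\<dots> = ennreal (real n powr \<gamma> / real n ^ (2 * CARD('n)) * (C * real n ^ CARD('n) * real n powr (- \<gamma>)))"
      using C by (intro ennreal_mult[symmetric]) auto
    also have "real n powr \<gamma> / real n ^ (2 * CARD('n)) * (C * real n ^ CARD('n) * real n powr (- \<gamma>))
        = C / real n ^ CARD('n)"
      using n by (simp add: powr_minus power_mult power2_eq_square field_simps)
    finally show ?thesis .
  qed
  with C show ?thesis
    by (rule that)
qed

section \<open>Increments of the test functions\<close>

lemma sderiv_axis_increment_le:
  assumes der: "sderiv i f D"
    and bnd: "\<And>t. t \<in> closed_segment 0 h \<Longrightarrow> \<bar>D (u + t *\<^sub>R axis i 1)\<bar> \<le> L"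
  shows "\<bar>f (u + h *\<^sub>R axis i 1) - f u\<bar> \<le> L * \<bar>h\<bar>"
proof -
  define \<phi> where "\<phi> t = f (u + t *\<^sub>R axis i 1)" for t
  have "(\<phi> has_field_derivative D (u + t *\<^sub>R axis i 1)) (at t)" for t
  proof -
    have "((\<lambda>s. f ((u + t *\<^sub>R axis i 1) + s *\<^sub>R axis i 1)) has_real_derivative D (u + t *\<^sub>R axis i 1)) (at 0)"
      using der unfolding sderiv_def by blast
    then have "((\<lambda>s. \<phi> (s + t)) has_field_derivative D (u + t *\<^sub>R axis i 1)) (at 0)"
      unfolding \<phi>_def by (simp add: algebra_simps)
    then show ?thesis
      using DERIV_shift[of \<phi> _ 0 t] by simp
  qed
  then have "norm (\<phi> h - \<phi> 0) \<le> L * norm (h - 0)"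
    by (intro field_differentiable_bound[of "closed_segment 0 h"])
       (auto intro: has_field_derivative_at_within bnd)
  then show ?thesis
    unfolding \<phi>_def by simp
qed

lemma sderiv_increment_le:
  fixes f :: "real^'n::finite \<Rightarrow> real"
  assumes der: "\<And>i. sderiv i f (D i)"
    and bnd: "\<And>i w. norm (w - a) \<le> norm (b - a) \<Longrightarrow> \<bar>D i w\<bar> \<le> L"
  shows "\<bar>f b - f a\<bar> \<le> L * real CARD('n) * norm (b - a)"
proof -
  define c where "c I = (\<chi> j. if j \<in> I then b $ j else a $ j)" for I :: "'n set"
  have path: "\<bar>f (c I) - f a\<bar> \<le> L * (\<Sum>i\<in>I. \<bar>b $ i - a $ i\<bar>)" for I
  proof (induction I rule: infinite_finite_induct)
    case (insert i I)
    have step: "c (insert i I) = c I + (b $ i - a $ i) *\<^sub>R axis i 1"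
      using insert.hyps unfolding c_def by (auto simp: vec_eq_iff axis_def)
    have "\<bar>D i (c I + t *\<^sub>R axis i 1)\<bar> \<le> L" if "t \<in> closed_segment 0 (b $ i - a $ i)" for t
    proof (rule bnd, rule norm_le_componentwise_cart)
      fix j
      have "\<bar>t\<bar> \<le> \<bar>b $ i - a $ i\<bar>"
        using that by (auto simp: closed_segment_eq_real_ivl split: if_splits)
      then show "norm ((c I + t *\<^sub>R axis i 1 - a) $ j) \<le> norm ((b - a) $ j)"
        using insert.hyps unfolding c_def by (auto simp: axis_def)
    qed
    then have "\<bar>f (c (insert i I)) - f (c I)\<bar> \<le> L * \<bar>b $ i - a $ i\<bar>"
      unfolding step by (rule sderiv_axis_increment_le[OF der])
    then show ?case
      using insert by (simp add: algebra_simps)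
  qed (simp_all add: c_def vec_eq_iff)
  have "0 \<le> L"
  proof -
    have "\<bar>D undefined a\<bar> \<le> L"
      by (rule bnd) simp
    then show ?thesis
      by linarith
  qed
  have "c UNIV = b"
    by (simp add: c_def vec_eq_iff)
  then have "\<bar>f b - f a\<bar> \<le> L * (\<Sum>i\<in>UNIV. \<bar>b $ i - a $ i\<bar>)"
    using path[of UNIV] by simp
  also have "\<dots> \<le> L * (\<Sum>i\<in>(UNIV :: 'n set). norm (b - a))"
    using \<open>0 \<le> L\<close> component_le_norm_cart[of "b - a"] by (intro mult_left_mono sum_mono) auto
  finally show ?thesis
    by simp
qed

lemma le_mult_min_square_one:
  fixes x A r :: real
  assumes "0 \<le> r" and "1 \<le> r \<Longrightarrow> x \<le> A" and "r < 1 \<Longrightarrow> x \<le> A * r\<^sup>2"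
  shows "x \<le> A * min (r\<^sup>2) 1"
proof (cases "1 \<le> r")
  case True
  then have "1 \<le> r\<^sup>2"
    by (simp add: one_le_power)
  then show ?thesis
    using True assms(2) by simp
next
  case False
  then have "r\<^sup>2 \<le> 1"
    using assms(1) by (simp add: power_le_one)
  then show ?thesis
    using False assms(3) by simp
qed

lemma sum_indicator_cball_scaled_le:
  fixes X :: "(real^'n::finite) set"
  assumes R: "0 \<le> R" and n: "1 \<le> n" and X: "finite X" "X \<subseteq> lattice"
  shows "(\<Sum>x\<in>X. indicator (cball 0 R) ((1 / real n) *\<^sub>R x) :: real)
           \<le> (2 * R + 1) ^ CARD('n) * real n ^ CARD('n)"
proof -
  define N where "N = nat \<lfloor>R * real n\<rfloor>"
  let ?B = "{x \<in> (lattice :: (real^'n) set). infnorm x \<le> real N}"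
  have "X \<inter> {x. (1 / real n) *\<^sub>R x \<in> cball 0 R} \<subseteq> ?B"
  proof safe
    fix x assume x: "x \<in> X" and "(1 / real n) *\<^sub>R x \<in> cball 0 R"
    then have "real (lattice_radius x) \<le> R * real n"
      using X n lattice_radius_eq[of x] infnorm_le_norm[of x] by (auto simp: field_simps)
    then have "lattice_radius x \<le> N"
      unfolding N_def by (simp add: le_nat_iff le_floor_iff)
    then show "infnorm x \<le> real N"
      using X x lattice_radius_eq[of x] by auto
  qed (use X in auto)
  then have "card (X \<inter> {x. (1 / real n) *\<^sub>R x \<in> cball 0 R}) \<le> card ?B"
    by (rule card_mono[OF finite_lattice_ball])
  moreover have "(\<Sum>x\<in>X. indicator (cball 0 R) ((1 / real n) *\<^sub>R x) :: real)
      = real (card (X \<inter> {x. (1 / real n) *\<^sub>R x \<in> cball 0 R}))"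
    using X by (simp only: indicator_def sum_of_bool_eq)
  ultimately have "(\<Sum>x\<in>X. indicator (cball 0 R) ((1 / real n) *\<^sub>R x) :: real) \<le> real (card ?B)"
    by simp
  also have "\<dots> = (2 * real N + 1) ^ CARD('n)"
    by (simp add: card_lattice_ball add.commute)
  also have "\<dots> \<le> ((2 * R + 1) * real n) ^ CARD('n)"
  proof (intro power_mono)
    have "real N \<le> R * real n"
      unfolding N_def using R by simp
    then show "2 * real N + 1 \<le> (2 * R + 1) * real n"
      using n by (simp add: algebra_simps)
  qed simp
  finally show ?thesis
    by (simp add: power_mult_distrib)
qed

lemma C12c_bounds:
  fixes H :: "real \<Rightarrow> real^'n::finite \<Rightarrow> real"
  assumes "C12c T H"
  obtains R D M L where "0 \<le> R"
    and "\<And>s i. s \<in> {0..T} \<Longrightarrow> sderiv i (H s) (D i s)"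
    and "\<And>s u. s \<in> {0..T} \<Longrightarrow> R < norm u \<Longrightarrow> H s u = 0"
    and "\<And>s u. s \<in> {0..T} \<Longrightarrow> \<bar>H s u\<bar> \<le> M"
    and "\<And>s i w. s \<in> {0..T} \<Longrightarrow> norm w \<le> R + 2 \<Longrightarrow> \<bar>D i s w\<bar> \<le> L"
proof -
  obtain Ht D D2 where W: "C12_wit T H Ht D D2"
    using assms unfolding C12c_def C12_def by blast
  obtain K where K: "compact K" "\<And>s u. s \<in> {0..T} \<Longrightarrow> u \<notin> K \<Longrightarrow> H s u = 0"
    using assms unfolding C12c_def by blast
  obtain R0 where R0: "\<And>u. u \<in> K \<Longrightarrow> norm u \<le> R0"
    using compact_imp_bounded[OF K(1)] unfolding bounded_iff by blast
  define R where "R = max R0 0"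
  have R: "0 \<le> R" "\<And>s u. s \<in> {0..T} \<Longrightarrow> R < norm u \<Longrightarrow> H s u = 0"
    using K(2) R0 unfolding R_def by force+
  have cont_H: "continuous_on ({0..T} \<times> cball 0 R) (\<lambda>p. H (fst p) (snd p))"
    and cont_D: "continuous_on ({0..T} \<times> cball 0 (R + 2)) (\<lambda>p. \<Sum>i\<in>UNIV. \<bar>D i (fst p) (snd p)\<bar>)"
    using W unfolding C12_wit_def by (auto intro!: continuous_intros intro: continuous_on_subset)
  obtain M where M: "\<And>p. p \<in> {0..T} \<times> cball 0 R \<Longrightarrow> \<bar>H (fst p) (snd p)\<bar> \<le> M" "0 \<le> M"
    using continuous_on_compact_bound[OF compact_Times[OF compact_Icc compact_cball] cont_H]
    by (metis real_norm_def)
  obtain L where L: "\<And>p. p \<in> {0..T} \<times> cball 0 (R + 2) \<Longrightarrow> \<bar>\<Sum>i\<in>UNIV. \<bar>D i (fst p) (snd p)\<bar>\<bar> \<le> L"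
    using continuous_on_compact_bound[OF compact_Times[OF compact_Icc compact_cball] cont_D]
    by (metis real_norm_def)
  show ?thesis
  proof (rule that[OF R(1) _ R(2)])
    show "sderiv i (H s) (D i s)" if "s \<in> {0..T}" for s i
      using W that unfolding C12_wit_def by blast
    show "\<bar>H s u\<bar> \<le> M" if "s \<in> {0..T}" for s u
      using M R(2)[OF that, of u] that by (cases "R < norm u") force+
    show "\<bar>D i s w\<bar> \<le> L" if "s \<in> {0..T}" "norm w \<le> R + 2" for s i w
      using L[of "(s, w)"] that member_le_sum[of i UNIV "\<lambda>i. \<bar>D i s w\<bar>"] by auto
  qed
qed

lemma compact_support_increment_le:
  fixes f :: "real^'n::finite \<Rightarrow> real"
  assumes der: "\<And>i. sderiv i f (D i)" and supp: "\<And>u. R < norm u \<Longrightarrow> f u = 0"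
    and M: "\<And>u. \<bar>f u\<bar> \<le> M" and L: "\<And>i w. norm w \<le> R + 2 \<Longrightarrow> \<bar>D i w\<bar> \<le> L"
    and A: "4 * M\<^sup>2 \<le> A" "(L * real CARD('n))\<^sup>2 \<le> A"
  shows "(f b - f a)\<^sup>2 \<le> A * min ((norm (b - a))\<^sup>2) 1 * (indicator (cball 0 R) a + indicator (cball 0 R) b)"
proof (cases "norm a \<le> R \<or> norm b \<le> R")
  case False
  then show ?thesis
    using supp by simp
next
  case True
  have "(f b - f a)\<^sup>2 \<le> A * min ((norm (b - a))\<^sup>2) 1"
  proof (rule le_mult_min_square_one)
    have "\<bar>f b - f a\<bar> \<le> 2 * M"
      using M[of a] M[of b] by linarith
    then have "(f b - f a)\<^sup>2 \<le> (2 * M)\<^sup>2"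
      by (metis abs_ge_zero power2_abs power_mono)
    then show "(f b - f a)\<^sup>2 \<le> A"
      using A(1) by (simp add: power_mult_distrib)
  next
    assume near: "norm (b - a) < 1"
    have "\<bar>D i w\<bar> \<le> L" if "norm (w - a) \<le> norm (b - a)" for i w
    proof (rule L)
      have "norm w \<le> norm a + norm (w - a)" "norm a \<le> norm b + norm (b - a)"
        using norm_triangle_sub[of w a] norm_triangle_sub[of a b] by (simp_all add: norm_minus_commute)
      then show "norm w \<le> R + 2"
        using True that near by linarith
    qed
    then have "\<bar>f b - f a\<bar> \<le> L * real CARD('n) * norm (b - a)"
      using der by (intro sderiv_increment_le) auto
    then have "(f b - f a)\<^sup>2 \<le> (L * real CARD('n))\<^sup>2 * (norm (b - a))\<^sup>2"
      by (metis abs_ge_zero power2_abs power_mono power_mult_distrib)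
    also have "\<dots> \<le> A * (norm (b - a))\<^sup>2"
      using A(2) by (intro mult_right_mono) auto
    finally show "(f b - f a)\<^sup>2 \<le> A * (norm (b - a))\<^sup>2" .
  qed simp
  moreover have "1 \<le> (indicator (cball 0 R) a + indicator (cball 0 R) b :: real)"
    using True by (auto simp: indicator_def)
  moreover have "0 \<le> A"
    using A(1) zero_le_power2[of M] by linarith
  then have "0 \<le> A * min ((norm (b - a))\<^sup>2) 1"
    by simp
  ultimately show ?thesis
    by (metis mult.right_neutral mult_left_mono order_trans)
qed

lemma C12c_increment_envelope:
  fixes H :: "real \<Rightarrow> real^'n::finite \<Rightarrow> real"
  assumes "C12c T H"
  obtains A \<Phi> where "increment_envelope T H A \<Phi>"
proof -
  obtain R D M L where R: "0 \<le> R"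
    and der: "\<And>s i. s \<in> {0..T} \<Longrightarrow> sderiv i (H s) (D i s)"
    and supp: "\<And>s u. s \<in> {0..T} \<Longrightarrow> R < norm u \<Longrightarrow> H s u = 0"
    and M: "\<And>s u. s \<in> {0..T} \<Longrightarrow> \<bar>H s u\<bar> \<le> M"
    and L: "\<And>s i w. s \<in> {0..T} \<Longrightarrow> norm w \<le> R + 2 \<Longrightarrow> \<bar>D i s w\<bar> \<le> L"
    using C12c_bounds[OF assms] by metis
  define A where "A = 4 * M\<^sup>2 + (L * real CARD('n))\<^sup>2 + (2 * R + 1) ^ CARD('n)"
  have A: "4 * M\<^sup>2 \<le> A" "(L * real CARD('n))\<^sup>2 \<le> A" "(2 * R + 1) ^ CARD('n) \<le> A"
    unfolding A_def using R by (simp_all add: add_increasing add_increasing2)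
  have "increment_envelope T H A (indicator (cball 0 R))"
    unfolding increment_envelope_def
  proof (intro conjI allI impI ballI)
    show "0 \<le> A"
      using A(1) zero_le_power2[of M] by linarith
    fix n :: nat and X :: "(real^'n) set"
    assume "1 \<le> n" and "finite X \<and> X \<subseteq> lattice"
    then have "(\<Sum>x\<in>X. indicator (cball 0 R) ((1 / real n) *\<^sub>R x)) \<le> (2 * R + 1) ^ CARD('n) * real n ^ CARD('n)"
      using R by (intro sum_indicator_cball_scaled_le) auto
    also have "\<dots> \<le> A * real n ^ CARD('n)"
      using A(3) by (intro mult_right_mono) auto
    finally show "(\<Sum>x\<in>X. indicator (cball 0 R) ((1 / real n) *\<^sub>R x)) \<le> A * real n ^ CARD('n)" .
  next
    fix s a b assume "s \<in> {0..T}"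
    then show "(H s b - H s a)\<^sup>2 \<le> A * min ((norm (b - a))\<^sup>2) 1 * (indicator (cball 0 R) a + indicator (cball 0 R) b)"
      using der supp M L A by (intro compact_support_increment_le) auto
  qed simp
  then show ?thesis
    by (rule that)
qed

lemma polynomial_weight_le_moments:
  fixes q r :: real
  assumes "0 \<le> q" "0 \<le> r" "q \<le> B0" "r ^ m * q \<le> Bm"
  shows "q * (1 + r) ^ m \<le> 2 ^ m * (B0 + Bm)"
proof -
  have "(1 + r) ^ m \<le> 2 ^ m * (1 + r ^ m)"
  proof (cases "r \<le> 1")
    case True
    then have "(1 + r) ^ m \<le> 2 ^ m"
      using assms by (intro power_mono) auto
    then show ?thesis
      using assms by (simp add: add_increasing2 order_trans)
  next
    case False
    then have "(1 + r) ^ m \<le> (2 * r) ^ m"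
      by (intro power_mono) auto
    then show ?thesis
      by (simp add: power_mult_distrib distrib_left add_increasing)
  qed
  then have "q * (1 + r) ^ m \<le> q * (2 ^ m * (1 + r ^ m))"
    using assms(1) by (rule mult_left_mono)
  also have "\<dots> = 2 ^ m * (q + r ^ m * q)"
    by (simp add: algebra_simps)
  also have "\<dots> \<le> 2 ^ m * (B0 + Bm)"
    using assms by (intro mult_left_mono add_mono) auto
  finally show ?thesis .
qed

lemma S12_decay_bound:
  fixes H :: "real \<Rightarrow> real^'n::finite \<Rightarrow> real"
  assumes "S12 T H"
  obtains D B where "\<And>s i. s \<in> {0..T} \<Longrightarrow> sderiv i (H s) (D i s)"
    and "\<And>s u. s \<in> {0..T} \<Longrightarrow> \<bar>H s u\<bar> * (1 + norm u) ^ m \<le> B"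
    and "\<And>s i u. s \<in> {0..T} \<Longrightarrow> \<bar>D i s u\<bar> * (1 + norm u) ^ m \<le> B"
proof -
  obtain Gt :: "real \<Rightarrow> real^'n \<Rightarrow> real" and D E1 :: "'n \<Rightarrow> real \<Rightarrow> real^'n \<Rightarrow> real"
    and D2 E2 :: "'n \<Rightarrow> 'n \<Rightarrow> real \<Rightarrow> real^'n \<Rightarrow> real"
    where W: "C12_wit T H Gt D D2"
    and decay: "\<forall>k::nat. \<exists>B. \<forall>s\<in>{0..T}. \<forall>u.
        norm u ^ k * (\<bar>H s u\<bar> + (\<Sum>j\<in>UNIV. \<bar>D j s u\<bar>) + (\<Sum>i\<in>UNIV. \<Sum>j\<in>UNIV. \<bar>D2 i j s u\<bar>)
          + \<bar>Gt s u\<bar> + (\<Sum>j\<in>UNIV. \<bar>E1 j s u\<bar>) + (\<Sum>i\<in>UNIV. \<Sum>j\<in>UNIV. \<bar>E2 i j s u\<bar>)) \<le> B"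
    using assms unfolding S12_def by blast
  define Q where "Q s u = \<bar>H s u\<bar> + (\<Sum>j\<in>UNIV. \<bar>D j s u\<bar>) + (\<Sum>i\<in>UNIV. \<Sum>j\<in>UNIV. \<bar>D2 i j s u\<bar>)
          + \<bar>Gt s u\<bar> + (\<Sum>j\<in>UNIV. \<bar>E1 j s u\<bar>) + (\<Sum>i\<in>UNIV. \<Sum>j\<in>UNIV. \<bar>E2 i j s u\<bar>)" for s u
  obtain B0 where B0: "\<forall>s\<in>{0..T}. \<forall>u. norm u ^ 0 * Q s u \<le> B0"
    using decay unfolding Q_def by blast
  obtain Bm where Bm: "\<forall>s\<in>{0..T}. \<forall>u. norm u ^ m * Q s u \<le> Bm"
    using decay unfolding Q_def by blast
  have Q_ge: "\<bar>H s u\<bar> \<le> Q s u" "\<bar>D i s u\<bar> \<le> Q s u" for s u i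
  proof -
    have "\<bar>D i s u\<bar> \<le> (\<Sum>j\<in>UNIV. \<bar>D j s u\<bar>)"
      by (rule member_le_sum) auto
    moreover have "0 \<le> (\<Sum>i\<in>UNIV. \<Sum>j\<in>UNIV. \<bar>D2 i j s u\<bar>)" "0 \<le> (\<Sum>j\<in>UNIV. \<bar>E1 j s u\<bar>)"
      "0 \<le> (\<Sum>i\<in>UNIV. \<Sum>j\<in>UNIV. \<bar>E2 i j s u\<bar>)" "0 \<le> (\<Sum>j\<in>UNIV. \<bar>D j s u\<bar>)"
      by (auto intro: sum_nonneg)
    ultimately show "\<bar>H s u\<bar> \<le> Q s u" "\<bar>D i s u\<bar> \<le> Q s u"
      unfolding Q_def by (smt (verit, best) abs_ge_zero)+
  qed
  have Q_decay: "Q s u * (1 + norm u) ^ m \<le> 2 ^ m * (B0 + Bm)" if "s \<in> {0..T}" for s u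
    using Q_ge(1)[of s u] B0 Bm that by (intro polynomial_weight_le_moments) auto
  show ?thesis
  proof (rule that)
    show "sderiv i (H s) (D i s)" if "s \<in> {0..T}" for s i
      using W that unfolding C12_wit_def by blast
    show "\<bar>H s u\<bar> * (1 + norm u) ^ m \<le> 2 ^ m * (B0 + Bm)" if "s \<in> {0..T}" for s u
      by (rule order_trans[OF mult_right_mono[OF Q_ge(1)] Q_decay[OF that]]) simp
    show "\<bar>D i s u\<bar> * (1 + norm u) ^ m \<le> 2 ^ m * (B0 + Bm)" if "s \<in> {0..T}" for s i u
      by (rule order_trans[OF mult_right_mono[OF Q_ge(2)] Q_decay[OF that]]) simp
  qed
qed

lemma inverse_power_one_plus_norm_le:
  fixes a w :: "'a::real_normed_vector"
  assumes "norm (w - a) \<le> 1"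
  shows "1 / (1 + norm w) ^ m \<le> 2 ^ m / (1 + norm a) ^ m"
proof -
  have "norm a \<le> norm w + norm (w - a)"
    using norm_triangle_sub[of a w] by (simp add: norm_minus_commute)
  then have "1 + norm a \<le> 2 + 2 * norm w"
    using assms norm_ge_zero[of w] by linarith
  then have "(1 + norm a) ^ m \<le> 2 ^ m * (1 + norm w) ^ m"
    by (metis power_mono power_mult_distrib distrib_left mult.right_neutral add_nonneg_nonneg
        norm_ge_zero zero_le_one)
  then show ?thesis
    by (simp add: field_simps add_pos_nonneg)
qed

lemma inverse_power_one_plus_norm_bounds:
  fixes u :: "'a::real_normed_vector"
  shows "0 \<le> 1 / (1 + norm u) ^ m" and "1 / (1 + norm u) ^ m \<le> 1"
proof -
  have "1 \<le> (1 + norm u) ^ m"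
    by (rule one_le_power) simp
  then show "0 \<le> 1 / (1 + norm u) ^ m" "1 / (1 + norm u) ^ m \<le> 1"
    by (simp_all add: divide_le_eq)
qed

lemma sum_radial_inverse_power_le:
  fixes x :: real
  assumes "0 < x" "1 \<le> d"
  shows "(\<Sum>k=1..N. real k ^ (d - 1) * (x / (x + real k)) ^ (d + 1)) \<le> x ^ d"
proof -
  have "real k ^ (d - 1) * (x / (x + real k)) ^ (d + 1) \<le> x ^ (d - 1) * (x / (x + real k))\<^sup>2" for k
  proof -
    have "real k * x / (x + real k) \<le> x"
      using assms by (simp add: field_simps)
    then have "(real k * x / (x + real k)) ^ (d - 1) \<le> x ^ (d - 1)"
      using assms by (intro power_mono) auto
    moreover have "real k ^ (d - 1) * (x / (x + real k)) ^ (d + 1)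
        = (real k * x / (x + real k)) ^ (d - 1) * (x / (x + real k))\<^sup>2"
      using assms by (simp add: power_mult_distrib power_divide power_add[symmetric] field_simps)
    ultimately show ?thesis
      by (simp add: mult_right_mono)
  qed
  then have "(\<Sum>k=1..N. real k ^ (d - 1) * (x / (x + real k)) ^ (d + 1))
      \<le> x ^ (d - 1) * (\<Sum>k=1..N. (x / (x + real k))\<^sup>2)"
    by (simp add: sum_distrib_left sum_mono)
  also have "\<dots> \<le> x ^ (d - 1) * x"
    using assms by (intro mult_left_mono sum_shifted_inverse_square_le) auto
  also have "\<dots> = x ^ d"
    using assms by (simp add: power_eq_if)
  finally show ?thesis .
qed

lemma sum_lattice_inverse_power_le:
  fixes X :: "(real^'n::finite) set"
  assumes n: "1 \<le> n" and X: "finite X" "X \<subseteq> lattice"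
  shows "(\<Sum>x\<in>X. 1 / (1 + norm ((1 / real n) *\<^sub>R x)) ^ (CARD('n) + 1))
           \<le> (1 + 2 * real CARD('n) * 3 ^ (CARD('n) - 1)) * real n ^ CARD('n)"
proof -
  define F where "F k = (real n / (real n + real k)) ^ (CARD('n) + 1)" for k :: nat
  have term_le: "1 / (1 + norm ((1 / real n) *\<^sub>R x)) ^ (CARD('n) + 1) \<le> F (lattice_radius x)"
    if x: "x \<in> lattice" for x :: "real^'n"
  proof -
    have "real (lattice_radius x) \<le> norm x"
      using lattice_radius_eq[OF x] infnorm_le_norm[of x] by simp
    then have "1 + real (lattice_radius x) / real n \<le> 1 + norm ((1 / real n) *\<^sub>R x)"
      using n by (simp add: divide_right_mono)
    then have "1 / (1 + norm ((1 / real n) *\<^sub>R x)) ^ (CARD('n) + 1)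
        \<le> 1 / (1 + real (lattice_radius x) / real n) ^ (CARD('n) + 1)"
      by (intro divide_left_mono power_mono mult_pos_pos zero_less_power) (auto intro: add_pos_nonneg)
    also have "\<dots> = F (lattice_radius x)"
      unfolding F_def using n by (simp add: field_simps power_divide)
    finally show ?thesis .
  qed
  have radial: "(\<Sum>k=1..N. real k ^ (CARD('n) - 1) * F k) \<le> real n ^ CARD('n)" for N
    unfolding F_def using n by (intro sum_radial_inverse_power_le) auto
  have "(\<Sum>x\<in>X. 1 / (1 + norm ((1 / real n) *\<^sub>R x)) ^ (CARD('n) + 1)) \<le> (\<Sum>x\<in>X. F (lattice_radius x))"
    using X term_le by (intro sum_mono) auto
  also have "\<dots> \<le> F 0 + 2 * real CARD('n) * 3 ^ (CARD('n) - 1) * real n ^ CARD('n)"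
    using X radial by (intro lattice_radial_sum_le) (auto simp: F_def)
  also have "\<dots> \<le> (1 + 2 * real CARD('n) * 3 ^ (CARD('n) - 1)) * real n ^ CARD('n)"
    using n by (simp add: F_def distrib_right one_le_power)
  finally show ?thesis .
qed

lemma square_diff_le_weights:
  fixes x y B p q :: real
  assumes "\<bar>x\<bar> \<le> B * p" "\<bar>y\<bar> \<le> B * q" "0 \<le> p" "p \<le> 1" "0 \<le> q" "q \<le> 1"
  shows "(x - y)\<^sup>2 \<le> 2 * B\<^sup>2 * (p + q)"
proof -
  have sq: "z\<^sup>2 \<le> B\<^sup>2 * r" if "\<bar>z\<bar> \<le> B * r" "0 \<le> r" "r \<le> 1" for z r :: real
  proof -
    have "z\<^sup>2 \<le> (B * r)\<^sup>2"
      using that(1) by (metis abs_ge_zero power2_abs power_mono)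
    also have "\<dots> = B\<^sup>2 * (r * r)"
      by (simp add: power_mult_distrib power2_eq_square)
    also have "\<dots> \<le> B\<^sup>2 * r"
      using that by (intro mult_left_mono mult_left_le) auto
    finally show ?thesis .
  qed
  have "(x - y)\<^sup>2 \<le> 2 * x\<^sup>2 + 2 * y\<^sup>2"
    using zero_le_power2[of "x + y"] by (simp add: power2_eq_square algebra_simps)
  also have "\<dots> \<le> 2 * B\<^sup>2 * (p + q)"
    using sq[of x p] sq[of y q] assms by (simp add: algebra_simps)
  finally show ?thesis .
qed

lemma decaying_increment_le:
  fixes f :: "real^'n::finite \<Rightarrow> real" and m :: nat
  defines "\<Phi> \<equiv> \<lambda>u. 1 / (1 + norm u) ^ m"
  assumes der: "\<And>i. sderiv i f (D i)"
    and f: "\<And>u. \<bar>f u\<bar> \<le> B * \<Phi> u" and D: "\<And>i u. \<bar>D i u\<bar> \<le> B * \<Phi> u"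
    and A: "2 * B\<^sup>2 \<le> A" "(2 ^ m * B * real CARD('n))\<^sup>2 \<le> A"
  shows "(f b - f a)\<^sup>2 \<le> A * min ((norm (b - a))\<^sup>2) 1 * (\<Phi> a + \<Phi> b)"
proof -
  have \<Phi>: "0 \<le> \<Phi> u" "\<Phi> u \<le> 1" for u
    unfolding \<Phi>_def by (rule inverse_power_one_plus_norm_bounds)+
  have "0 \<le> B"
    using f[of 0] \<Phi>[of 0] unfolding \<Phi>_def by simp
  have "(f b - f a)\<^sup>2 \<le> (A * (\<Phi> a + \<Phi> b)) * min ((norm (b - a))\<^sup>2) 1"
  proof (rule le_mult_min_square_one)
    have "(f b - f a)\<^sup>2 \<le> 2 * B\<^sup>2 * (\<Phi> b + \<Phi> a)"
      using f \<Phi> by (intro square_diff_le_weights) auto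
    also have "\<dots> \<le> A * (\<Phi> a + \<Phi> b)"
      using A(1) \<Phi>[of a] \<Phi>[of b] by (simp add: add.commute mult_right_mono)
    finally show "(f b - f a)\<^sup>2 \<le> A * (\<Phi> a + \<Phi> b)" .
  next
    assume near: "norm (b - a) < 1"
    have "\<bar>D i w\<bar> \<le> 2 ^ m * B * \<Phi> a" if "norm (w - a) \<le> norm (b - a)" for i w
    proof -
      have "\<Phi> w \<le> 2 ^ m * \<Phi> a"
        using inverse_power_one_plus_norm_le[of w a m] that near unfolding \<Phi>_def by simp
      then have "B * \<Phi> w \<le> B * (2 ^ m * \<Phi> a)"
        using \<open>0 \<le> B\<close> by (rule mult_left_mono)
      then show ?thesis
        using D[of i w] by (simp add: ac_simps)
    qed
    then have "\<bar>f b - f a\<bar> \<le> 2 ^ m * B * \<Phi> a * real CARD('n) * norm (b - a)"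
      using der by (intro sderiv_increment_le) auto
    then have "(f b - f a)\<^sup>2 \<le> (2 ^ m * B * \<Phi> a * real CARD('n) * norm (b - a))\<^sup>2"
      by (metis abs_ge_zero power2_abs power_mono)
    also have "\<dots> = (2 ^ m * B * real CARD('n))\<^sup>2 * (\<Phi> a)\<^sup>2 * (norm (b - a))\<^sup>2"
      by (simp add: power_mult_distrib)
    also have "\<dots> \<le> A * (\<Phi> a + \<Phi> b) * (norm (b - a))\<^sup>2"
    proof (intro mult_right_mono mult_mono)
      show "(\<Phi> a)\<^sup>2 \<le> \<Phi> a + \<Phi> b"
        using \<Phi>[of a] \<Phi>[of b] mult_left_le[of "\<Phi> a" "\<Phi> a"] by (simp add: power2_eq_square)
    qed (use A(2) order_trans[OF zero_le_power2 A(2)] in auto)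
    finally show "(f b - f a)\<^sup>2 \<le> A * (\<Phi> a + \<Phi> b) * (norm (b - a))\<^sup>2" .
  qed simp
  then show ?thesis
    by (simp add: ac_simps)
qed

lemma S12_increment_envelope:
  fixes H :: "real \<Rightarrow> real^'n::finite \<Rightarrow> real"
  assumes "S12 T H"
  obtains A \<Phi> where "increment_envelope T H A \<Phi>"
proof -
  let ?d = "real CARD('n)"
  let ?m = "CARD('n) + 1"
  let ?\<Phi> = "\<lambda>u :: real^'n. 1 / (1 + norm u) ^ ?m"
  obtain D B where der: "\<And>s i. s \<in> {0..T} \<Longrightarrow> sderiv i (H s) (D i s)"
    and H_decay: "\<And>s u. s \<in> {0..T} \<Longrightarrow> \<bar>H s u\<bar> * (1 + norm u) ^ ?m \<le> B"
    and D_decay: "\<And>s i u. s \<in> {0..T} \<Longrightarrow> \<bar>D i s u\<bar> * (1 + norm u) ^ ?m \<le> B"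
    using S12_decay_bound[OF assms] by metis
  define A where "A = 2 * B\<^sup>2 + (2 ^ ?m * B * ?d)\<^sup>2 + (1 + 2 * ?d * 3 ^ (CARD('n) - 1))"
  have A: "2 * B\<^sup>2 \<le> A" "(2 ^ ?m * B * ?d)\<^sup>2 \<le> A" "1 + 2 * ?d * 3 ^ (CARD('n) - 1) \<le> A"
    unfolding A_def by (simp_all add: add_increasing add_increasing2)
  have "increment_envelope T H A ?\<Phi>"
    unfolding increment_envelope_def
  proof (intro conjI allI impI ballI)
    show "0 \<le> A"
      using A(1) zero_le_power2[of B] by linarith
    fix n :: nat and X :: "(real^'n) set"
    assume "1 \<le> n" and "finite X \<and> X \<subseteq> lattice"
    then have "(\<Sum>x\<in>X. ?\<Phi> ((1 / real n) *\<^sub>R x)) \<le> (1 + 2 * ?d * 3 ^ (CARD('n) - 1)) * real n ^ CARD('n)"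
      by (intro sum_lattice_inverse_power_le) auto
    also have "\<dots> \<le> A * real n ^ CARD('n)"
      using A(3) by (intro mult_right_mono) auto
    finally show "(\<Sum>x\<in>X. ?\<Phi> ((1 / real n) *\<^sub>R x)) \<le> A * real n ^ CARD('n)" .
  next
    fix s a b assume s: "s \<in> {0..T}"
    have pos: "0 < (1 + norm u) ^ ?m" for u :: "real^'n"
      by (simp add: add_pos_nonneg)
    show "(H s b - H s a)\<^sup>2 \<le> A * min ((norm (b - a))\<^sup>2) 1 * (?\<Phi> a + ?\<Phi> b)"
    proof (rule decaying_increment_le[OF der[OF s] _ _ A(1,2)])
      show "\<bar>H s u\<bar> \<le> B * ?\<Phi> u" and "\<bar>D i s u\<bar> \<le> B * ?\<Phi> u" for u i
        using H_decay[OF s, of u] D_decay[OF s, of i u] pos[of u] by (simp_all add: pos_le_divide_eq)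
    qed
  qed simp
  then show ?thesis
    by (rule that)
qed

lemma S_gamma_increment_envelope:
  fixes H :: "real \<Rightarrow> real^'n::finite \<Rightarrow> real"
  assumes "S_gamma T \<gamma> H"
  obtains A \<Phi> where "increment_envelope T H A \<Phi>"
proof (cases "\<gamma> \<le> 1 \<or> 2 \<le> CARD('n)")
  case True
  then have "C12c T H"
    using assms unfolding S_gamma_def by simp
  then show ?thesis
    using C12c_increment_envelope that by blast
next
  case False
  then have "S12 T H"
    using assms unfolding S_gamma_def by simp
  then show ?thesis
    using S12_increment_envelope that by blast
qed

theorem mainTheorem8:
  fixes T \<gamma> :: real and H :: "real \<Rightarrow> real^'n::finite \<Rightarrow> real"
  assumes "T > 0" and "0 < \<gamma>" and "\<gamma> < 2" and "S_gamma T \<gamma> H"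
  shows "(\<exists>C>0. \<forall>n::nat. n \<ge> 1 \<longrightarrow>
            ennreal (real n powr \<gamma> / real n ^ (2 * CARD('n))) * (SUP s\<in>{0..T}. dsum \<gamma> H n s)
              \<le> ennreal (C * (real n + real n powr \<gamma>) / real n ^ (CARD('n) + 1))
          \<and> C * (real n + real n powr \<gamma>) / real n ^ (CARD('n) + 1)
              \<le> C * (real n + real n powr \<gamma>) / real n ^ 2)
       \<and> (\<exists>C'>0. \<forall>n::nat. n \<ge> 2 \<longrightarrow>
            (real n + real n powr \<gamma>) / real n ^ 2 \<le> C' * r_n \<gamma> n / real n)"
proof -
  obtain A \<Phi> where "increment_envelope T H A \<Phi>"
    using S_gamma_increment_envelope[OF assms(4)] .
  then obtain C where C: "0 \<le> C"
    and sup: "\<And>n. 1 \<le> n \<Longrightarrow>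
      ennreal (real n powr \<gamma> / real n ^ (2 * CARD('n))) * (SUP s\<in>{0..T}. dsum \<gamma> H n s)
        \<le> ennreal (C / real n ^ CARD('n))"
    using scaled_sup_dsum_le assms(2,3) by blast
  show ?thesis
    by (intro conjI rate_of_inverse_power_bound[OF C sup] exI[of _ "2 + 2 / ln 2"])
       (use r_n_bound in \<open>auto intro: add_pos_nonneg\<close>)
qed

end
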